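(* For every $k>0$ there exists $N$ such that for every integer $n\ge2$ and every prime power $q$, the number of polynomials $P\in\mathcal L_n(q)$ which have more than $N\log n$ irreducible factors in $\mathbb F_q[x]$ (counted with multiplicity) is at most $n^{-k}|\mathcal L_n(q)|$.
   Context: $\mathcal L_n(q)$ denotes the set of monic polynomials $P(x)\in\mathbb F_q[x]$ of degree $n$ with $P(0)=(-1)^n$. *)

theory Defs
  imports "HOL-Algebra.Polynomial_Divisibility" Complex_Main
begin

text \<open>Polynomials over a field R (HOL-Algebra list representation, leading coefficient first).
  L_set R n: monic polynomials of degree n with constant term (-1)^n.\<close>

definition L_set :: "('a, 'b) ring_scheme \<Rightarrow> nat \<Rightarrow> 'a list set" where
  "L_set R n = {P \<in> carrier (poly_ring R). P \<noteq> [] \<and> degree P = n \<and>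
       lead_coeff P = \<one>\<^bsub>R\<^esub> \<and>
       ring.eval R P \<zero>\<^bsub>R\<^esub> = (\<ominus>\<^bsub>R\<^esub> \<one>\<^bsub>R\<^esub>) [^]\<^bsub>R\<^esub> n}"

definition num_irred_factors :: "('a, 'b) ring_scheme \<Rightarrow> 'a list \<Rightarrow> nat" where
  "num_irred_factors R P = (THE m. \<exists>fs. length fs = m \<and> set fs \<subseteq> carrier (poly_ring R) \<and>
       (\<forall>f \<in> set fs. pirreducible\<^bsub>R\<^esub> (carrier R) f) \<and>
       foldr (\<otimes>\<^bsub>poly_ring R\<^esub>) fs \<one>\<^bsub>poly_ring R\<^esub> = P)"

end

(*
  Unique factorisation identifies monic polynomials of degree n over F_q with multisets of monic
  irreducibles of total degree n, and L_n(q) with the fibre of the multiplicative constant-term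
  map over (-1)^n, of size q^(n-1). Fix 1 < z < sqrt 2 and let G_j(t) be the sum of
  z^(number of factors) over the fibre of t in degree j. Counting every prime power p^a dividing M
  with weight deg p (a logarithmic derivative of the Euler product) expresses j G_j(t) through
  the G_i with i < j. Together with sum_(d|i) d pi_q(d) = q^i, and the fact that there are only
  O(q^(i/2)) proper prime powers of degree i, this gives G_j(t) <= q^(j-1) beta_j by induction,
  where beta_j grows polynomially in j. By Markov's inequality at most z^(-N ln n) q^(n-1) beta_n
  elements of L_n(q) have more than N ln n factors, and this is below n^(-k) q^(n-1) for large N.
*)

theory Submission
  imports Defs
begin

section \<open>Weighted degree of a multiset\<close>

definition mset_degree :: "('p \<Rightarrow> nat) \<Rightarrow> 'p multiset \<Rightarrow> nat" where
  "mset_degree dg M = (\<Sum>x\<in>#M. dg x)"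

lemma mset_degree_add [simp]: "mset_degree dg (M + N) = mset_degree dg M + mset_degree dg N"
  and mset_degree_empty [simp]: "mset_degree dg {#} = 0"
  and mset_degree_add_mset [simp]: "mset_degree dg (add_mset p M) = dg p + mset_degree dg M"
  and mset_degree_replicate [simp]: "mset_degree dg (replicate_mset a p) = a * dg p"
  by (simp_all add: mset_degree_def)

lemma mset_degree_eq_sum_count: "mset_degree dg M = (\<Sum>x\<in>set_mset M. count M x * dg x)"
proof (induction M)
  case (add x M)
  have "(\<Sum>y\<in>set_mset (add_mset x M). count (add_mset x M) y * dg y)
      = dg x + (\<Sum>y\<in>set_mset M. count M y * dg y)"
  proof (cases "x \<in># M")
    case True
    then have "(\<Sum>y\<in>set_mset (add_mset x M). count (add_mset x M) y * dg y)
        = (\<Sum>y\<in>set_mset M. count M y * dg y + (if y = x then dg y else 0))"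
      by (intro sum.cong) (auto simp: insert_absorb)
    then show ?thesis using True by (simp add: sum.distrib)
  next
    case False
    then have "(\<Sum>y\<in>set_mset M. count (add_mset x M) y * dg y)
        = (\<Sum>y\<in>set_mset M. count M y * dg y)"
      by (intro sum.cong) auto
    with False show ?thesis by (simp add: not_in_iff)
  qed
  then show ?case using add by (simp add: mset_degree_def)
qed simp

lemma size_le_mset_degree: "(\<And>p. p \<in># M \<Longrightarrow> 1 \<le> dg p) \<Longrightarrow> size M \<le> mset_degree dg M"
  unfolding mset_degree_def size_eq_sum_mset by (rule sum_mset_mono)

definition prime_power_divisors :: "'p multiset \<Rightarrow> ('p \<times> nat) set" where
  "prime_power_divisors M = Sigma (set_mset M) (\<lambda>p. {1..count M p})"

lemma mset_degree_eq_sum_prime_power_divisors: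
  "real (mset_degree dg M) = (\<Sum>(p, a)\<in>prime_power_divisors M. real (dg p))"
  by (simp add: prime_power_divisors_def sum.Sigma[symmetric] mset_degree_eq_sum_count)

section \<open>A majorant of polynomial growth\<close>

fun beta_sum :: "real \<Rightarrow> real \<Rightarrow> nat \<Rightarrow> real" where
  "beta_sum C K 0 = 0"
| "beta_sum C K (Suc j) = beta_sum C K j + (C + K * beta_sum C K j / real (Suc j))"

definition beta :: "real \<Rightarrow> real \<Rightarrow> nat \<Rightarrow> real" where
  "beta C K j = C + K * beta_sum C K (j - 1) / real j"

lemma beta_sum_Suc: "beta_sum C K (Suc j) = beta_sum C K j + beta C K (Suc j)"
  by (simp add: beta_def)

declare beta_sum.simps(2) [simp del]

lemma beta_sum_eq: "beta_sum C K j = (\<Sum>i=1..j. beta C K i)"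
  by (induction j) (simp_all add: beta_sum_Suc)

lemma of_nat_mult_beta: "1 \<le> j \<Longrightarrow> real j * beta C K j = real j * C + K * beta_sum C K (j - 1)"
  by (simp add: beta_def field_simps)

context
  fixes C K :: real
  assumes C: "0 \<le> C" and K: "0 \<le> K"
begin

lemma beta_sum_nonneg: "0 \<le> beta_sum C K j"
  using C K by (induction j) (simp_all add: beta_sum.simps(2))

lemma beta_nonneg: "0 \<le> beta C K j"
  using C K beta_sum_nonneg by (simp add: beta_def)

lemma beta_sum_mono: "i \<le> j \<Longrightarrow> beta_sum C K i \<le> beta_sum C K j"
  by (induction j rule: dec_induct)
    (use beta_nonneg in \<open>auto simp: beta_sum_Suc intro: order_trans\<close>)

lemma beta_le_beta_sum: "1 \<le> i \<Longrightarrow> i \<le> j \<Longrightarrow> beta C K i \<le> beta_sum C K j"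
  using beta_sum_mono[of i j] beta_sum_nonneg[of "i - 1"] beta_sum_Suc[of C K "i - 1"] by simp

lemma beta_sum_convolution_le:
  assumes "\<And>i. 0 \<le> w i"
  shows "(\<Sum>i=1..<j. beta C K (j - i) * (z + w i)) \<le> (z + sum w {1..<j}) * beta_sum C K (j - 1)"
proof -
  have "(\<Sum>i=1..<j. beta C K (j - i)) = (\<Sum>i=1..j - 1. beta C K (j - 1 + 1 - i))"
    by (intro sum.cong) auto
  also have "\<dots> = beta_sum C K (j - 1)"
    by (simp only: sum.atLeastAtMost_rev[symmetric] beta_sum_eq)
  finally have "(\<Sum>i=1..<j. beta C K (j - i) * z) = z * beta_sum C K (j - 1)"
    by (metis sum_distrib_right mult.commute)
  moreover have "(\<Sum>i=1..<j. beta C K (j - i) * w i) \<le> (\<Sum>i=1..<j. beta_sum C K (j - 1) * w i)"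
    using assms by (intro sum_mono mult_right_mono beta_le_beta_sum) auto
  ultimately show ?thesis
    by (simp add: distrib_left distrib_right sum.distrib sum_distrib_right[symmetric] mult.commute)
qed

end

lemma power_add_one_ge:
  fixes x :: real
  assumes "0 \<le> x" and "1 \<le> m"
  shows "x ^ m + real m * x ^ (m - 1) \<le> (x + 1) ^ m"
  using \<open>1 \<le> m\<close>
proof (induction m rule: dec_induct)
  case (step m)
  have "x ^ Suc m + real (Suc m) * x ^ m \<le> (x + 1) * (x ^ m + real m * x ^ (m - 1))"
    using step assms by (cases m) (simp_all add: algebra_simps)
  also have "\<dots> \<le> (x + 1) * (x + 1) ^ m" using step assms by (intro mult_left_mono) auto
  finally show ?case by simp
qed simp

lemma beta_sum_le_power:
  assumes C: "0 \<le> C" and K: "0 \<le> K" "K \<le> real m - 1"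
  shows "beta_sum C K j \<le> C * real j ^ m"
proof (induction j)
  case (Suc j)
  have m: "1 \<le> m" using K by linarith
  show ?case
  proof (cases "j = 0")
    case False
    have "real j ^ m = real j * real j ^ (m - 1)"
      using m by (cases m) auto
    also have "\<dots> \<le> real (Suc j) * real j ^ (m - 1)"
      by (intro mult_right_mono) auto
    finally have "real j ^ m \<le> real (Suc j) * real j ^ (m - 1)" .
    then have "real j ^ m / real (Suc j) \<le> real j ^ (m - 1)"
      by (simp add: divide_le_eq mult.commute)
    then have "(K * C) * (real j ^ m / real (Suc j)) \<le> ((real m - 1) * C) * real j ^ (m - 1)"
      using C K by (intro mult_mono) auto
    then have "K * (C * real j ^ m) / real (Suc j) \<le> (real m - 1) * (C * real j ^ (m - 1))"
      by (simp add: mult.assoc)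
    moreover have "C \<le> C * real j ^ (m - 1)"
      using C False by (simp add: mult_le_cancel_left1)
    moreover have "C * real j ^ m + real m * (C * real j ^ (m - 1)) \<le> C * real (Suc j) ^ m"
      using mult_left_mono[OF power_add_one_ge[of "real j" m] C] m by (simp add: algebra_simps)
    moreover have "K * beta_sum C K j / real (Suc j) \<le> K * (C * real j ^ m) / real (Suc j)"
      using Suc K by (intro divide_right_mono mult_left_mono) auto
    ultimately show ?thesis
      using Suc by (simp add: beta_sum.simps(2) algebra_simps)
  qed (simp add: beta_sum.simps(2))
qed (use C in simp)

lemma beta_le_power:
  assumes C: "0 \<le> C" and K: "0 \<le> K" "K \<le> real m - 1" and n: "1 \<le> n"
  shows "beta C K n \<le> C * (1 + K) * real n ^ m"
proof -
  have "beta_sum C K (n - 1) \<le> C * real n ^ m"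
    using beta_sum_le_power[OF assms(1-3), of "n - 1"] C
    by (meson of_nat_0_le_iff of_nat_le_iff diff_le_self mult_left_mono order_trans power_mono)
  moreover have "K * beta_sum C K (n - 1) / real n \<le> K * beta_sum C K (n - 1) / 1"
    using n K beta_sum_nonneg[OF C K(1)] by (intro divide_left_mono) auto
  moreover have "C \<le> C * real n ^ m"
    using C n by (simp add: mult_le_cancel_left1)
  moreover have "K * beta_sum C K (n - 1) \<le> K * (C * real n ^ m)"
    using calculation(1) K by (intro mult_left_mono) auto
  ultimately have "beta C K n \<le> C * real n ^ m + K * (C * real n ^ m)"
    unfolding beta_def by linarith
  then show ?thesis by (simp add: algebra_simps)
qed

lemma beta_polynomial_bound:
  assumes "0 \<le> C" "0 \<le> K"
  obtains m D where "1 \<le> D" "\<And>n. 1 \<le> n \<Longrightarrow> beta C K n \<le> D * real n ^ m"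
proof
  show "1 \<le> max 1 (C * (1 + K))" by simp
  fix n :: nat assume "1 \<le> n"
  then have "beta C K n \<le> C * (1 + K) * real n ^ (nat \<lceil>K\<rceil> + 1)"
    using assms by (intro beta_le_power) linarith+
  also have "\<dots> \<le> max 1 (C * (1 + K)) * real n ^ (nat \<lceil>K\<rceil> + 1)"
    by (intro mult_right_mono) auto
  finally show "beta C K n \<le> max 1 (C * (1 + K)) * real n ^ (nat \<lceil>K\<rceil> + 1)" .
qed

section \<open>Counting factors in a graded free commutative monoid\<close>

text \<open>The monic polynomials over \<open>\<bbbF>\<^sub>q\<close>, seen as multisets of monic irreducibles \<open>Pr\<close> with
  degree \<open>dg\<close>; \<open>val M\<close> is the constant term of the product of \<open>M\<close> and \<open>T\<close> the set of nonzero
  constants.\<close>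

locale graded_multisets =
  fixes Pr :: "'p set" and dg :: "'p \<Rightarrow> nat" and val :: "'p multiset \<Rightarrow> 'v"
    and T :: "'v set" and q :: nat
  assumes deg_pos: "p \<in> Pr \<Longrightarrow> 1 \<le> dg p"
    and card_graded: "card {M. set_mset M \<subseteq> Pr \<and> mset_degree dg M = j} = q ^ j"
    and card_graded_fibre: "1 \<le> j \<Longrightarrow> t \<in> T \<Longrightarrow>
      card {M. set_mset M \<subseteq> Pr \<and> mset_degree dg M = j \<and> val M = t} \<le> q ^ (j - 1)"
    and val_cancel: "p \<in> Pr \<Longrightarrow> 1 \<le> a \<Longrightarrow> t \<in> T \<Longrightarrow>
      \<exists>s\<in>T. \<forall>M. set_mset M \<subseteq> Pr \<longrightarrow> val (M + replicate_mset a p) = t \<longrightarrow> val M = s"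
    and q_ge_2: "2 \<le> q"
begin

definition graded :: "nat \<Rightarrow> 'p multiset set" where
  "graded j = {M. set_mset M \<subseteq> Pr \<and> mset_degree dg M = j}"

text \<open>A pair \<open>(p, a)\<close> stands for the prime power \<open>p\<^sup>a\<close>.\<close>

definition prime_powers_upto :: "nat \<Rightarrow> ('p \<times> nat) set" where
  "prime_powers_upto j = {(p, a). p \<in> Pr \<and> 1 \<le> a \<and> a * dg p \<le> j}"

definition prime_powers_of_degree :: "nat \<Rightarrow> ('p \<times> nat) set" where
  "prime_powers_of_degree j = {(p, a). p \<in> Pr \<and> 1 \<le> a \<and> a * dg p = j}"

lemma card_graded_real: "real (card (graded j)) = real q ^ j"
  using card_graded[of j] by (simp add: graded_def)

lemma finite_graded: "finite (graded j)"
  using card_graded_real[of j] q_ge_2 card_ge_0_finite by force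

lemma graded_0: "graded 0 = {{#}}"
proof -
  have "M = {#}" if "M \<in> graded 0" for M
    using that size_le_mset_degree[of M dg] deg_pos by (force simp: graded_def)
  then show ?thesis by (auto simp: graded_def)
qed

lemma finite_primes_deg_le: "finite {p\<in>Pr. dg p \<le> j}"
proof -
  have "(\<lambda>p. {#p#}) ` {p\<in>Pr. dg p \<le> j} \<subseteq> (\<Union>i\<le>j. graded i)"
    by (auto simp: graded_def)
  then have "finite ((\<lambda>p. {#p#}) ` {p\<in>Pr. dg p \<le> j})"
    using finite_graded by (meson finite_UN_I finite_atMost finite_subset)
  then show ?thesis by (rule finite_imageD) (auto simp: inj_on_def)
qed

lemma finite_primes_of_degree: "finite {p\<in>Pr. dg p = j}"
  using finite_primes_deg_le[of j] by (rule finite_subset[rotated]) auto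

lemma finite_prime_powers_upto: "finite (prime_powers_upto j)"
proof -
  have "a \<le> j \<and> dg p \<le> j" if "(p, a) \<in> prime_powers_upto j" for p a
  proof -
    have "1 \<le> a" "1 \<le> dg p" "a * dg p \<le> j"
      using that deg_pos by (auto simp: prime_powers_upto_def)
    then have "a \<le> a * dg p" "dg p \<le> a * dg p" by simp_all
    with \<open>a * dg p \<le> j\<close> show ?thesis by linarith
  qed
  then have "prime_powers_upto j \<subseteq> {p\<in>Pr. dg p \<le> j} \<times> {1..j}"
    by (fastforce simp: prime_powers_upto_def)
  then show ?thesis
    by (rule finite_subset) (use finite_primes_deg_le in blast)
qed

lemma finite_prime_powers_of_degree: "finite (prime_powers_of_degree j)"
proof (rule finite_subset[OF _ finite_prime_powers_upto])
  show "prime_powers_of_degree j \<subseteq> prime_powers_upto j"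
    by (auto simp: prime_powers_of_degree_def prime_powers_upto_def)
qed

lemma prime_powers_upto_Suc:
  "prime_powers_upto (Suc j) = prime_powers_upto j \<union> prime_powers_of_degree (Suc j)"
  "prime_powers_upto j \<inter> prime_powers_of_degree (Suc j) = {}"
  by (auto simp: prime_powers_upto_def prime_powers_of_degree_def)

lemma prime_powers_upto_split:
  "prime_powers_upto j = {(p, a)\<in>prime_powers_upto j. a * dg p < j} \<union> prime_powers_of_degree j"
  "{(p, a)\<in>prime_powers_upto j. a * dg p < j} \<inter> prime_powers_of_degree j = {}"
  by (auto simp: prime_powers_upto_def prime_powers_of_degree_def)

lemma sum_prime_powers_below:
  "(\<Sum>x\<in>{(p, a)\<in>prime_powers_upto j. a * dg p < j}. g x)
    = (\<Sum>i=1..<j. \<Sum>x\<in>prime_powers_of_degree i. g x)"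
proof -
  let ?L = "{(p, a)\<in>prime_powers_upto j. a * dg p < j}"
  have "(\<lambda>(p, a). a * dg p) ` ?L \<subseteq> {1..<j}"
    using deg_pos by (force simp: prime_powers_upto_def Suc_le_eq)
  then have "(\<Sum>x\<in>?L. g x) = (\<Sum>i=1..<j. \<Sum>x\<in>{x\<in>?L. (\<lambda>(p, a). a * dg p) x = i}. g x)"
    using finite_subset[OF _ finite_prime_powers_upto[of j], of ?L]
    by (intro sum.group[symmetric]) auto
  also have "\<dots> = (\<Sum>i=1..<j. \<Sum>x\<in>prime_powers_of_degree i. g x)"
    by (intro sum.cong refl) (auto simp: prime_powers_upto_def prime_powers_of_degree_def)
  finally show ?thesis .
qed

lemma bij_betw_remove_prime_power:
  "bij_betw (\<lambda>(M, p, a). ((p, a), M - replicate_mset a p))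
     (Sigma (graded j) prime_power_divisors)
     (Sigma (prime_powers_upto j) (\<lambda>(p, a). graded (j - a * dg p)))"
proof (rule bij_betw_byWitness[where f' = "\<lambda>((p, a), M). (M + replicate_mset a p, p, a)"])
  show "(\<lambda>((p, a), M). (M + replicate_mset a p, p, a)) `
      Sigma (prime_powers_upto j) (\<lambda>(p, a). graded (j - a * dg p))
    \<subseteq> Sigma (graded j) prime_power_divisors"
    by (auto simp: graded_def prime_powers_upto_def prime_power_divisors_def)
  have "mset_degree dg (M - replicate_mset a p) + a * dg p = mset_degree dg M"
    if "replicate_mset a p \<subseteq># M" for M p a
    using mset_degree_add[of dg "M - replicate_mset a p" "replicate_mset a p"] that by simp
  then show "(\<lambda>(M, p, a). ((p, a), M - replicate_mset a p)) ` Sigma (graded j) prime_power_divisors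
      \<subseteq> Sigma (prime_powers_upto j) (\<lambda>(p, a). graded (j - a * dg p))"
    by (fastforce simp: graded_def prime_powers_upto_def prime_power_divisors_def
        count_le_replicate_mset_subset_eq dest: in_diffD)
qed (auto simp: prime_power_divisors_def count_le_replicate_mset_subset_eq)

text \<open>Each \<open>M\<close> of degree \<open>j\<close> is counted \<open>j = \<Sum>\<^sub>p dg p\<close> times on the right: once, with
  weight \<open>dg p\<close>, for every prime power \<open>p\<^sup>a\<close> dividing \<open>M\<close>. This is the logarithmic
  derivative of the Euler product.\<close>

lemma degree_times_sum_graded:
  fixes f :: "'p multiset \<Rightarrow> real"
  shows "real j * (\<Sum>M\<in>graded j. f M) =
    (\<Sum>(p, a)\<in>prime_powers_upto j. real (dg p) *
       (\<Sum>M\<in>graded (j - a * dg p). f (M + replicate_mset a p)))"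
proof -
  have "real j * (\<Sum>M\<in>graded j. f M) = (\<Sum>M\<in>graded j. real (mset_degree dg M) * f M)"
    by (simp add: sum_distrib_left graded_def)
  also have "\<dots> = (\<Sum>M\<in>graded j. \<Sum>(p, a)\<in>prime_power_divisors M. real (dg p) * f M)"
    by (simp add: mset_degree_eq_sum_prime_power_divisors sum_distrib_right case_prod_beta)
  also have "\<dots> = (\<Sum>(M, p, a)\<in>Sigma (graded j) prime_power_divisors. real (dg p) * f M)"
    by (subst sum.Sigma) (auto simp: finite_graded prime_power_divisors_def case_prod_beta)
  also have "\<dots> = (\<Sum>x\<in>Sigma (graded j) prime_power_divisors.
      (\<lambda>((p, a), M). real (dg p) * f (M + replicate_mset a p))
        ((\<lambda>(M, p, a). ((p, a), M - replicate_mset a p)) x))"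
    by (intro sum.cong) (auto simp: prime_power_divisors_def count_le_replicate_mset_subset_eq)
  also have "\<dots> = (\<Sum>((p, a), M)\<in>Sigma (prime_powers_upto j) (\<lambda>(p, a). graded (j - a * dg p)).
      real (dg p) * f (M + replicate_mset a p))"
    by (rule sum.reindex_bij_betw[OF bij_betw_remove_prime_power])
  also have "\<dots> = (\<Sum>(p, a)\<in>prime_powers_upto j. \<Sum>M\<in>graded (j - a * dg p).
      real (dg p) * f (M + replicate_mset a p))"
    using sum.Sigma[of "prime_powers_upto j" "\<lambda>(p, a). graded (j - a * dg p)"
        "\<lambda>(p, a) M. real (dg p) * f (M + replicate_mset a p)"]
    by (simp add: finite_prime_powers_upto finite_graded split_def)
  finally show ?thesis
    by (simp add: sum_distrib_left)
qed

text \<open>The analogue of \<open>\<Sum>\<^bsub>d | j\<^esub> d \<pi>\<^sub>q(d) = q\<^sup>j\<close>.\<close>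

lemma sum_prime_powers_of_degree:
  assumes "1 \<le> j"
  shows "(\<Sum>(p, a)\<in>prime_powers_of_degree j. real (dg p)) = real q ^ j"
proof -
  obtain i where j: "j = Suc i" using assms by (cases j) auto
  define w where "w j = (\<lambda>(p, a). real (dg p) * real q ^ (j - a * dg p))" for j
  have total: "real j * real q ^ j = (\<Sum>x\<in>prime_powers_upto j. w j x)" for j
    using degree_times_sum_graded[of j "\<lambda>_. 1"] by (simp add: card_graded_real w_def case_prod_beta)
  have "w (Suc i) x = real q * w i x" if "x \<in> prime_powers_upto i" for x
    using that by (auto simp: w_def prime_powers_upto_def Suc_diff_le)
  then have "(\<Sum>x\<in>prime_powers_upto i. w (Suc i) x) = real q * (real i * real q ^ i)"
    by (simp add: total sum_distrib_left)
  moreover have "(\<Sum>x\<in>prime_powers_of_degree (Suc i). w (Suc i) x)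
      = (\<Sum>(p, a)\<in>prime_powers_of_degree (Suc i). real (dg p))"
    by (intro sum.cong) (auto simp: w_def prime_powers_of_degree_def)
  ultimately show ?thesis
    using total[of "Suc i"] prime_powers_upto_Suc[of i] j
    by (simp add: sum.union_disjoint finite_prime_powers_upto finite_prime_powers_of_degree
        algebra_simps)
qed

lemma sum_deg_primes_of_degree_le: "(\<Sum>p\<in>{p\<in>Pr. dg p = j}. real (dg p)) \<le> real q ^ j"
proof (cases "j = 0")
  case True
  then have "{p\<in>Pr. dg p = j} = {}" using deg_pos by fastforce
  then show ?thesis by (metis sum.empty zero_le_power of_nat_0_le_iff)
next
  case False
  have "(\<Sum>p\<in>{p\<in>Pr. dg p = j}. real (dg p))
      = (\<Sum>x\<in>(\<lambda>p. (p, 1::nat)) ` {p\<in>Pr. dg p = j}. real (dg (fst x)))"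
    by (subst sum.reindex) (auto simp: inj_on_def)
  also have "\<dots> \<le> (\<Sum>x\<in>prime_powers_of_degree j. real (dg (fst x)))"
    by (intro sum_mono2 finite_prime_powers_of_degree) (auto simp: prime_powers_of_degree_def)
  finally show ?thesis using False sum_prime_powers_of_degree[of j] by (simp add: case_prod_beta)
qed

lemma prime_power_term_le:
  assumes z: "1 \<le> z" and a: "2 \<le> a" "a \<le> i"
  shows "z ^ a * real q ^ (i div a) * sqrt 2 ^ i \<le> 2 * real q ^ (i - 1) * z ^ i"
proof -
  define d where "d = i div a"
  have "2 * d \<le> a * d" using a by simp
  also have "a * d \<le> i" by (simp add: d_def)
  finally have d: "2 * d \<le> i" .
  have "sqrt 2 ^ i \<le> sqrt 2 ^ (2 * (i - d))" using d by (intro power_increasing) auto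
  also have "\<dots> = 2 * 2 ^ (i - 1 - d)"
  proof -
    have "i - d = Suc (i - 1 - d)" using d a by linarith
    then show ?thesis by (simp add: power_mult)
  qed
  also have "\<dots> \<le> 2 * real q ^ (i - 1 - d)" using q_ge_2 by (intro mult_left_mono power_mono) auto
  finally have "real q ^ d * sqrt 2 ^ i \<le> real q ^ d * (2 * real q ^ (i - 1 - d))"
    by (intro mult_left_mono) auto
  also have "\<dots> = 2 * real q ^ (i - 1)"
    using d a by (simp add: power_add[symmetric])
  finally have "real q ^ d * sqrt 2 ^ i \<le> 2 * real q ^ (i - 1)" .
  moreover have "z ^ a \<le> z ^ i" using z a by (intro power_increasing) auto
  ultimately have "z ^ a * (real q ^ d * sqrt 2 ^ i) \<le> z ^ i * (2 * real q ^ (i - 1))"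
    using z by (simp add: mult_mono)
  then show ?thesis unfolding d_def by (simp add: algebra_simps)
qed

text \<open>A proper prime power \<open>p\<^sup>a\<close> of degree \<open>i\<close> has \<open>dg p \<le> i / 2\<close>, so there are only
  \<open>O(q\<^bsup>i/2\<^esup>)\<close> of them.\<close>

lemma sum_higher_prime_powers_le:
  assumes z: "1 \<le> z"
  shows "(\<Sum>(p, a)\<in>{(p, a)\<in>prime_powers_of_degree i. 2 \<le> a}. real (dg p) * z ^ a)
    \<le> 2 * real q ^ (i - 1) * (real i * (z / sqrt 2) ^ i)"
proof -
  define P where "P a = {p\<in>Pr. a * dg p = i}" for a
  have fin: "finite (P a)" if "1 \<le> a" for a
  proof (rule finite_subset[OF _ finite_primes_deg_le[of i]])
    show "P a \<subseteq> {p\<in>Pr. dg p \<le> i}"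
      using that mult_le_mono1[of 1 a] by (auto simp: P_def)
  qed
  have "{(p, a)\<in>prime_powers_of_degree i. 2 \<le> a} = prod.swap ` Sigma {2..i} P"
  proof (intro equalityI subsetI)
    fix x assume "x \<in> {(p, a)\<in>prime_powers_of_degree i. 2 \<le> a}"
    then obtain p a where x: "x = (p, a)" "p \<in> Pr" "2 \<le> a" "a * dg p = i"
      by (auto simp: prime_powers_of_degree_def)
    then have "a \<le> i" using deg_pos[of p] by (metis mult.right_neutral mult_le_mono2)
    with x show "x \<in> prod.swap ` Sigma {2..i} P" by (auto simp: P_def image_iff)
  qed (auto simp: P_def prime_powers_of_degree_def)
  then have "(\<Sum>(p, a)\<in>{(p, a)\<in>prime_powers_of_degree i. 2 \<le> a}. real (dg p) * z ^ a)
      = (\<Sum>a=2..i. z ^ a * (\<Sum>p\<in>P a. real (dg p)))"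
    by (simp add: sum.reindex sum.Sigma fin sum_distrib_left mult.commute)
  also have "\<dots> \<le> (\<Sum>a=2..i. 2 * real q ^ (i - 1) * z ^ i / sqrt 2 ^ i)"
  proof (rule sum_mono)
    fix a assume a: "a \<in> {2..i}"
    have "(\<Sum>p\<in>P a. real (dg p)) \<le> (\<Sum>p\<in>{p\<in>Pr. dg p = i div a}. real (dg p))"
      using a by (intro sum_mono2 finite_primes_of_degree) (auto simp: P_def)
    also have "\<dots> \<le> real q ^ (i div a)"
      by (rule sum_deg_primes_of_degree_le)
    finally have "z ^ a * (\<Sum>p\<in>P a. real (dg p)) \<le> z ^ a * real q ^ (i div a)"
      using z by (intro mult_left_mono) auto
    also have "\<dots> \<le> 2 * real q ^ (i - 1) * z ^ i / sqrt 2 ^ i"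
      using prime_power_term_le[OF z, of a i] a by (simp add: pos_le_divide_eq)
    finally show "z ^ a * (\<Sum>p\<in>P a. real (dg p)) \<le> 2 * real q ^ (i - 1) * z ^ i / sqrt 2 ^ i" .
  qed
  also have "\<dots> = real (i - 1) * (2 * real q ^ (i - 1) * z ^ i / sqrt 2 ^ i)"
    by simp
  also have "\<dots> \<le> real i * (2 * real q ^ (i - 1) * z ^ i / sqrt 2 ^ i)"
    using z by (intro mult_right_mono) auto
  finally show ?thesis by (simp add: power_divide algebra_simps)
qed

lemma sum_prime_powers_of_degree_le:
  assumes z: "1 \<le> z"
  shows "(\<Sum>(p, a)\<in>prime_powers_of_degree i. real (dg p) * z ^ a)
    \<le> z * real q ^ i + 2 * real q ^ (i - 1) * (real i * (z / sqrt 2) ^ i)"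
proof -
  have split: "prime_powers_of_degree i = (\<lambda>p. (p, 1)) ` {p\<in>Pr. dg p = i}
      \<union> {(p, a)\<in>prime_powers_of_degree i. 2 \<le> a}"
    by (auto simp: prime_powers_of_degree_def image_iff)
  have "(\<Sum>(p, a)\<in>(\<lambda>p. (p, 1)) ` {p\<in>Pr. dg p = i}. real (dg p) * z ^ a)
      = z * (\<Sum>p\<in>{p\<in>Pr. dg p = i}. real (dg p))"
    by (simp add: sum.reindex inj_on_def sum_distrib_left mult.commute)
  also have "\<dots> \<le> z * real q ^ i"
    using z sum_deg_primes_of_degree_le by (intro mult_left_mono) auto
  moreover have "finite {(p, a)\<in>prime_powers_of_degree i. 2 \<le> a}"
    by (rule finite_subset[OF _ finite_prime_powers_of_degree[of i]]) auto
  ultimately show ?thesis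
    using sum_higher_prime_powers_le[OF z, of i] finite_primes_of_degree[of i]
    by (subst split, subst sum.union_disjoint) auto
qed

definition fibre_term :: "real \<Rightarrow> 'v \<Rightarrow> 'p multiset \<Rightarrow> real" where
  "fibre_term z t M = (if val M = t then z ^ size M else 0)"

definition fibre_weight :: "real \<Rightarrow> nat \<Rightarrow> 'v \<Rightarrow> real" where
  "fibre_weight z j t = (\<Sum>M\<in>graded j. fibre_term z t M)"

lemma shifted_fibre_weight_le:
  assumes "0 \<le> z" "p \<in> Pr" "1 \<le> a" "t \<in> T"
  obtains s where "s \<in> T"
    and "\<And>m. (\<Sum>M\<in>graded m. fibre_term z t (M + replicate_mset a p)) \<le> z ^ a * fibre_weight z m s"
proof -
  obtain s where s: "s \<in> T"
    "\<And>M. set_mset M \<subseteq> Pr \<Longrightarrow> val (M + replicate_mset a p) = t \<Longrightarrow> val M = s"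
    using val_cancel[OF assms(2-4)] by blast
  have "(\<Sum>M\<in>graded m. fibre_term z t (M + replicate_mset a p)) \<le> z ^ a * fibre_weight z m s" for m
    unfolding fibre_weight_def sum_distrib_left
    using s(2) assms(1) by (intro sum_mono) (auto simp: fibre_term_def graded_def power_add)
  with s(1) show ?thesis by (rule that)
qed

text \<open>\<open>E\<close> absorbs the contribution \<open>\<Sum>\<^sub>i i (z/\<surd>2)\<^sup>i\<close> of the proper prime powers, which is
  finite for \<open>z < \<surd>2\<close>.\<close>

context
  fixes z E :: real
  assumes z: "1 \<le> z"
    and E: "\<And>J. (\<Sum>i=1..J. real i * (z / sqrt 2) ^ i) \<le> E"
begin

lemma E_nonneg: "0 \<le> E"
  using E[of 0] by simp

lemma power_term_le_E: "1 \<le> i \<Longrightarrow> real i * (z / sqrt 2) ^ i \<le> E"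
  using E[of i] member_le_sum[of i "{1..i}" "\<lambda>i. real i * (z / sqrt 2) ^ i"] z by simp

lemma prime_powers_of_degree_shift_le:
  assumes "1 \<le> i" "i < j"
  shows "(\<Sum>(p, a)\<in>prime_powers_of_degree i. real (dg p) * z ^ a) * real q ^ (j - i - 1)
    \<le> real q ^ (j - 1) * (z + real i * (z / sqrt 2) ^ i)"
proof -
  define e where "e = real i * (z / sqrt 2) ^ i"
  have "2 * real q ^ (i - 1) * real q ^ (j - i - 1)
      \<le> real q * real q ^ (i - 1) * real q ^ (j - i - 1)"
    using q_ge_2 by (intro mult_right_mono) auto
  also have "\<dots> = real q ^ (j - 1)"
    using assms by (simp flip: power_add power_Suc)
  finally have "(2 * real q ^ (i - 1) * real q ^ (j - i - 1)) * e \<le> real q ^ (j - 1) * e"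
    using z by (intro mult_right_mono) (auto simp: e_def)
  moreover have "real q ^ i * real q ^ (j - i - 1) = real q ^ (j - 1)"
    using assms by (simp flip: power_add)
  moreover have "(z * real q ^ i + 2 * real q ^ (i - 1) * e) * real q ^ (j - i - 1)
      = z * (real q ^ i * real q ^ (j - i - 1)) + (2 * real q ^ (i - 1) * real q ^ (j - i - 1)) * e"
    by (simp add: algebra_simps)
  ultimately have "(z * real q ^ i + 2 * real q ^ (i - 1) * e) * real q ^ (j - i - 1)
      \<le> real q ^ (j - 1) * (z + e)"
    by (simp add: algebra_simps)
  then show ?thesis
    using mult_right_mono[OF sum_prime_powers_of_degree_le[OF z, of i], of "real q ^ (j - i - 1)"]
    unfolding e_def by simp
qed

lemma sum_lower_prime_powers_le:
  defines "C \<equiv> z + 2 * E" and "K \<equiv> z + E"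
  shows "(\<Sum>(p, a)\<in>{(p, a)\<in>prime_powers_upto j. a * dg p < j}.
      real (dg p) * z ^ a * (real q ^ (j - a * dg p - 1) * beta C K (j - a * dg p)))
    \<le> real q ^ (j - 1) * ((z + E) * beta_sum C K (j - 1))"
proof -
  have CK: "0 \<le> C" "0 \<le> K" using z E_nonneg by (auto simp: C_def K_def)
  have "(\<Sum>(p, a)\<in>prime_powers_of_degree i.
      real (dg p) * z ^ a * (real q ^ (j - a * dg p - 1) * beta C K (j - a * dg p)))
    \<le> real q ^ (j - 1) * (beta C K (j - i) * (z + real i * (z / sqrt 2) ^ i))"
    if i: "1 \<le> i" "i < j" for i
  proof -
    have "(\<Sum>(p, a)\<in>prime_powers_of_degree i.
        real (dg p) * z ^ a * (real q ^ (j - a * dg p - 1) * beta C K (j - a * dg p)))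
      = (\<Sum>(p, a)\<in>prime_powers_of_degree i. real (dg p) * z ^ a) *
          real q ^ (j - i - 1) * beta C K (j - i)"
      by (simp add: sum_distrib_right prime_powers_of_degree_def mult.assoc case_prod_beta)
    also have "\<dots> \<le> real q ^ (j - 1) * (z + real i * (z / sqrt 2) ^ i) * beta C K (j - i)"
      using prime_powers_of_degree_shift_le[OF i] beta_nonneg[OF CK] by (rule mult_right_mono)
    finally show ?thesis by (simp add: algebra_simps)
  qed
  then have "(\<Sum>(p, a)\<in>{(p, a)\<in>prime_powers_upto j. a * dg p < j}.
      real (dg p) * z ^ a * (real q ^ (j - a * dg p - 1) * beta C K (j - a * dg p)))
    \<le> real q ^ (j - 1) * (\<Sum>i=1..<j. beta C K (j - i) * (z + real i * (z / sqrt 2) ^ i))"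
    unfolding sum_prime_powers_below sum_distrib_left by (intro sum_mono) auto
  also have "\<dots> \<le> real q ^ (j - 1) *
      ((z + (\<Sum>i=1..<j. real i * (z / sqrt 2) ^ i)) * beta_sum C K (j - 1))"
    by (intro mult_left_mono beta_sum_convolution_le[OF CK]) (use z in auto)
  also have "\<dots> \<le> real q ^ (j - 1) * ((z + E) * beta_sum C K (j - 1))"
  proof -
    have "(\<Sum>i=1..<j. real i * (z / sqrt 2) ^ i) \<le> E"
      using E[of "j - 1"] by (cases j) (simp_all add: atLeastLessThanSuc_atLeastAtMost)
    then show ?thesis
      using beta_sum_nonneg[OF CK] by (intro mult_left_mono mult_right_mono) auto
  qed
  finally show ?thesis .
qed

lemma card_primes_fibre_le:
  assumes "1 \<le> j" "t \<in> T"
  shows "card {p\<in>Pr. dg p = j \<and> val {#p#} = t} \<le> q ^ (j - 1)"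
proof -
  have "card {p\<in>Pr. dg p = j \<and> val {#p#} = t}
      \<le> card {M. set_mset M \<subseteq> Pr \<and> mset_degree dg M = j \<and> val M = t}"
    using finite_graded[of j]
    by (intro card_inj_on_le[where f = "\<lambda>p. {#p#}"])
      (auto simp: graded_def inj_on_def elim: finite_subset[rotated])
  also have "\<dots> \<le> q ^ (j - 1)"
    using card_graded_fibre[OF assms] .
  finally show ?thesis .
qed

lemma top_degree_part_le:
  assumes j: "1 \<le> j" and t: "t \<in> T"
  shows "(\<Sum>(p, a)\<in>prime_powers_of_degree j. real (dg p) * fibre_term z t (replicate_mset a p))
    \<le> real q ^ (j - 1) * (real j * z + 2 * E)"
proof -
  define S1 where "S1 = (\<lambda>p. (p, 1::nat)) ` {p\<in>Pr. dg p = j}"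
  define S2 where "S2 = {(p, a)\<in>prime_powers_of_degree j. 2 \<le> a}"
  have "(\<Sum>(p, a)\<in>S1. real (dg p) * fibre_term z t (replicate_mset a p))
      = real j * z * card {p\<in>Pr. dg p = j \<and> val {#p#} = t}"
    using sum.inter_filter[OF finite_primes_of_degree[of j], of "\<lambda>_. real j * z"
        "\<lambda>p. val {#p#} = t"]
    by (auto simp: S1_def sum.reindex inj_on_def fibre_term_def conj_ac mult.commute
        intro!: sum.cong)
  also have "\<dots> \<le> real q ^ (j - 1) * (real j * z)"
    using card_primes_fibre_le[OF j t] z
    by (simp add: mult.commute mult_left_mono flip: of_nat_power)
  finally have B1: "(\<Sum>(p, a)\<in>S1. real (dg p) * fibre_term z t (replicate_mset a p))
      \<le> real q ^ (j - 1) * (real j * z)" .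
  have "(\<Sum>(p, a)\<in>S2. real (dg p) * fibre_term z t (replicate_mset a p))
      \<le> (\<Sum>(p, a)\<in>S2. real (dg p) * z ^ a)"
    using z by (intro sum_mono) (auto simp: fibre_term_def)
  also have "\<dots> \<le> 2 * real q ^ (j - 1) * (real j * (z / sqrt 2) ^ j)"
    unfolding S2_def by (rule sum_higher_prime_powers_le[OF z])
  also have "\<dots> \<le> real q ^ (j - 1) * (2 * E)"
    using power_term_le_E[OF j] by (simp add: mult_left_mono)
  finally have B2: "(\<Sum>(p, a)\<in>S2. real (dg p) * fibre_term z t (replicate_mset a p))
      \<le> real q ^ (j - 1) * (2 * E)" .
  have "prime_powers_of_degree j = S1 \<union> S2"
    by (auto simp: prime_powers_of_degree_def S1_def S2_def image_iff)
  moreover have "finite S1" "finite S2" "S1 \<inter> S2 = {}"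
    using finite_primes_of_degree[of j] finite_prime_powers_of_degree[of j]
    by (auto simp: S1_def S2_def intro: finite_subset)
  ultimately show ?thesis
    using B1 B2 by (simp add: sum.union_disjoint algebra_simps)
qed

lemma lower_degree_part_le:
  assumes IH: "\<And>m s. 1 \<le> m \<Longrightarrow> m < j \<Longrightarrow> s \<in> T \<Longrightarrow>
      fibre_weight z m s \<le> real q ^ (m - 1) * beta (z + 2 * E) (z + E) m"
    and t: "t \<in> T"
  shows "(\<Sum>(p, a)\<in>{(p, a)\<in>prime_powers_upto j. a * dg p < j}.
      real (dg p) * (\<Sum>M\<in>graded (j - a * dg p). fibre_term z t (M + replicate_mset a p)))
    \<le> real q ^ (j - 1) * ((z + E) * beta_sum (z + 2 * E) (z + E) (j - 1))"
proof -
  have "real (dg p) * (\<Sum>M\<in>graded (j - a * dg p). fibre_term z t (M + replicate_mset a p))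
      \<le> real (dg p) * z ^ a *
          (real q ^ (j - a * dg p - 1) * beta (z + 2 * E) (z + E) (j - a * dg p))"
    if "(p, a) \<in> prime_powers_upto j" "a * dg p < j" for p a
  proof -
    have p: "p \<in> Pr" "1 \<le> a" using that by (auto simp: prime_powers_upto_def)
    then have m: "1 \<le> j - a * dg p" "j - a * dg p < j" using that(2) deg_pos[of p] by auto
    obtain s where "s \<in> T" and shift:
      "(\<Sum>M\<in>graded (j - a * dg p). fibre_term z t (M + replicate_mset a p))
        \<le> z ^ a * fibre_weight z (j - a * dg p) s"
      using shifted_fibre_weight_le[of z p a t] z p t by auto
    note shift
    also have "\<dots> \<le> z ^ a * (real q ^ (j - a * dg p - 1) * beta (z + 2 * E) (z + E) (j - a * dg p))"
      using IH[OF m \<open>s \<in> T\<close>] z by (intro mult_left_mono) auto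
    finally show ?thesis by (auto simp: mult.assoc intro: mult_left_mono)
  qed
  then have "(\<Sum>(p, a)\<in>{(p, a)\<in>prime_powers_upto j. a * dg p < j}.
      real (dg p) * (\<Sum>M\<in>graded (j - a * dg p). fibre_term z t (M + replicate_mset a p)))
    \<le> (\<Sum>(p, a)\<in>{(p, a)\<in>prime_powers_upto j. a * dg p < j}.
      real (dg p) * z ^ a *
        (real q ^ (j - a * dg p - 1) * beta (z + 2 * E) (z + E) (j - a * dg p)))"
    by (intro sum_mono) auto
  also have "\<dots> \<le> real q ^ (j - 1) * ((z + E) * beta_sum (z + 2 * E) (z + E) (j - 1))"
    by (rule sum_lower_prime_powers_le)
  finally show ?thesis .
qed

lemma fibre_weight_le:
  assumes "1 \<le> j" "t \<in> T"
  shows "fibre_weight z j t \<le> real q ^ (j - 1) * beta (z + 2 * E) (z + E) j"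
  using assms
proof (induction j arbitrary: t rule: less_induct)
  case (less j)
  define h where "h = (\<lambda>(p, a). real (dg p) *
    (\<Sum>M\<in>graded (j - a * dg p). fibre_term z t (M + replicate_mset a p)))"
  have "real j * fibre_weight z j t
      = sum h {(p, a)\<in>prime_powers_upto j. a * dg p < j} + sum h (prime_powers_of_degree j)"
    unfolding fibre_weight_def degree_times_sum_graded h_def
    using prime_powers_upto_split[of j] finite_prime_powers_upto[of j]
    by (metis (no_types, lifting) finite_Un sum.union_disjoint)
  also have "sum h {(p, a)\<in>prime_powers_upto j. a * dg p < j}
      \<le> real q ^ (j - 1) * ((z + E) * beta_sum (z + 2 * E) (z + E) (j - 1))"
    unfolding h_def by (rule lower_degree_part_le[OF less.IH less.prems(2)])
  also have "sum h (prime_powers_of_degree j)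
      = (\<Sum>(p, a)\<in>prime_powers_of_degree j. real (dg p) * fibre_term z t (replicate_mset a p))"
    by (intro sum.cong) (auto simp: h_def prime_powers_of_degree_def graded_0)
  also have "\<dots> \<le> real q ^ (j - 1) * (real j * z + 2 * E)"
    by (rule top_degree_part_le[OF less.prems])
  also have "real q ^ (j - 1) * ((z + E) * beta_sum (z + 2 * E) (z + E) (j - 1))
      + real q ^ (j - 1) * (real j * z + 2 * E)
      \<le> real j * (real q ^ (j - 1) * beta (z + 2 * E) (z + E) j)"
  proof -
    have "real q ^ (j - 1) * (real j * z + 2 * E) \<le> real q ^ (j - 1) * (real j * (z + 2 * E))"
      using less.prems(1) E_nonneg
      by (intro mult_left_mono) (auto simp: distrib_left mult_le_cancel_right1)
    then have "real q ^ (j - 1) * ((z + E) * beta_sum (z + 2 * E) (z + E) (j - 1))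
        + real q ^ (j - 1) * (real j * z + 2 * E)
        \<le> real q ^ (j - 1) *
          (real j * (z + 2 * E) + (z + E) * beta_sum (z + 2 * E) (z + E) (j - 1))"
      by (simp add: distrib_left)
    then show ?thesis
      by (simp only: of_nat_mult_beta[OF less.prems(1), symmetric]) (simp add: algebra_simps)
  qed
  finally show ?case
    using less.prems(1) by (simp add: mult_le_cancel_left_pos)
qed

end

lemma card_many_factors_le:
  assumes z: "1 < z" and E: "\<And>J. (\<Sum>i=1..J. real i * (z / sqrt 2) ^ i) \<le> E"
    and n: "1 \<le> n" and t: "t \<in> T"
  shows "real (card {M\<in>graded n. val M = t \<and> c < real (size M)})
    \<le> z powr (- c) * (real q ^ (n - 1) * beta (z + 2 * E) (z + E) n)"
proof -
  define S where "S = {M\<in>graded n. val M = t \<and> c < real (size M)}"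
  have "1 \<le> z powr (- c) * fibre_term z t M" if "M \<in> S" for M
  proof -
    have "z powr c \<le> z ^ size M"
      using that z by (auto simp: S_def powr_realpow[symmetric] intro: powr_mono)
    then show ?thesis
      using z that by (simp add: S_def fibre_term_def powr_minus field_simps)
  qed
  then have "(\<Sum>M\<in>S. 1) \<le> (\<Sum>M\<in>S. z powr (- c) * fibre_term z t M)"
    by (rule sum_mono)
  then have "real (card S) \<le> (\<Sum>M\<in>S. z powr (- c) * fibre_term z t M)"
    by simp
  also have "\<dots> \<le> z powr (- c) * fibre_weight z n t"
    unfolding fibre_weight_def sum_distrib_left[symmetric] using z finite_graded[of n]
    by (intro mult_left_mono sum_mono2) (auto simp: S_def fibre_term_def)
  also have "\<dots> \<le> z powr (- c) * (real q ^ (n - 1) * beta (z + 2 * E) (z + E) n)"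
    using fibre_weight_le[OF _ E n t] z by (intro mult_left_mono) auto
  finally show ?thesis unfolding S_def .
qed

end

section \<open>Monic polynomials over a finite field\<close>

definition poly_prod_mset :: "('a, 'b) ring_scheme \<Rightarrow> 'a list multiset \<Rightarrow> 'a list" where
  "poly_prod_mset R M = foldr (\<otimes>\<^bsub>poly_ring R\<^esub>) (SOME xs. mset xs = M) \<one>\<^bsub>poly_ring R\<^esub>"

definition monic_irreducibles :: "('a, 'b) ring_scheme \<Rightarrow> 'a list set" where
  "monic_irreducibles R = {p \<in> carrier (poly_ring R). p \<noteq> [] \<and> lead_coeff p = \<one>\<^bsub>R\<^esub> \<and>
     pirreducible\<^bsub>R\<^esub> (carrier R) p}"

definition monic_polys :: "('a, 'b) ring_scheme \<Rightarrow> nat \<Rightarrow> 'a list set" where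
  "monic_polys R j = {P \<in> carrier (poly_ring R). P \<noteq> [] \<and> degree P = j \<and> lead_coeff P = \<one>\<^bsub>R\<^esub>}"

context field
begin

interpretation UP: principal_domain "poly_ring R"
  by (rule univ_poly_is_principal[OF carrier_is_subfield])

lemma poly_foldr_append:
  "set xs \<subseteq> carrier (poly_ring R) \<Longrightarrow> set ys \<subseteq> carrier (poly_ring R) \<Longrightarrow>
    foldr (\<otimes>\<^bsub>poly_ring R\<^esub>) (xs @ ys) \<one>\<^bsub>poly_ring R\<^esub>
    = foldr (\<otimes>\<^bsub>poly_ring R\<^esub>) xs \<one>\<^bsub>poly_ring R\<^esub> \<otimes>\<^bsub>poly_ring R\<^esub> foldr (\<otimes>\<^bsub>poly_ring R\<^esub>) ys \<one>\<^bsub>poly_ring R\<^esub>"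
  by (induction xs) (auto simp: UP.m_assoc)

lemma poly_prod_mset_mset:
  assumes "set xs \<subseteq> carrier (poly_ring R)"
  shows "poly_prod_mset R (mset xs) = foldr (\<otimes>\<^bsub>poly_ring R\<^esub>) xs \<one>\<^bsub>poly_ring R\<^esub>"
proof -
  define ys where "ys = (SOME ys. mset ys = mset xs)"
  have "mset ys = mset xs" unfolding ys_def by (rule someI) auto
  then show ?thesis
    using UP.multlist_perm_cong[of ys xs] assms mset_eq_setD[of ys xs]
    by (simp add: poly_prod_mset_def ys_def)
qed

lemma poly_prod_mset_closed:
  "set_mset M \<subseteq> carrier (poly_ring R) \<Longrightarrow> poly_prod_mset R M \<in> carrier (poly_ring R)"
  by (metis ex_mset poly_prod_mset_mset set_mset_mset UP.multlist_closed)

lemma poly_prod_mset_add: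
  assumes "set_mset M \<subseteq> carrier (poly_ring R)" "set_mset N \<subseteq> carrier (poly_ring R)"
  shows "poly_prod_mset R (M + N) = poly_prod_mset R M \<otimes>\<^bsub>poly_ring R\<^esub> poly_prod_mset R N"
proof -
  obtain xs ys where "mset xs = M" "mset ys = N" by (metis ex_mset)
  then show ?thesis
    using assms poly_prod_mset_mset[of xs] poly_prod_mset_mset[of ys]
      poly_prod_mset_mset[of "xs @ ys"]
      poly_foldr_append[of xs ys]
    by auto
qed

lemma const_term_poly_prod_mset_add:
  assumes "set_mset M \<subseteq> carrier (poly_ring R)" "set_mset N \<subseteq> carrier (poly_ring R)"
  shows "const_term (poly_prod_mset R (M + N))
    = const_term (poly_prod_mset R M) \<otimes> const_term (poly_prod_mset R N)"
  using const_term_simprules_shell(2)[OF carrier_is_subring] assms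
  by (simp add: poly_prod_mset_add poly_prod_mset_closed)

lemma poly_mult_nonzero:
  assumes "p \<in> carrier (poly_ring R)" "p \<noteq> []" "q \<in> carrier (poly_ring R)" "q \<noteq> []"
  shows "p \<otimes>\<^bsub>poly_ring R\<^esub> q \<noteq> []"
    and "degree (p \<otimes>\<^bsub>poly_ring R\<^esub> q) = degree p + degree q"
    and "lead_coeff (p \<otimes>\<^bsub>poly_ring R\<^esub> q) = lead_coeff p \<otimes> lead_coeff q"
  using assms poly_mult_integral[OF carrier_is_subring] poly_mult_degree_eq[OF carrier_is_subring]
    poly_mult_lead_coeff[OF carrier_is_subring]
  by (auto simp: univ_poly_mult univ_poly_carrier)

lemma monic_irreducibles_degree: "p \<in> monic_irreducibles R \<Longrightarrow> 1 \<le> degree p"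
  using pirreducible_degree[OF carrier_is_subfield] by (auto simp: monic_irreducibles_def)

lemma poly_prod_mset_monic:
  assumes "set_mset M \<subseteq> monic_irreducibles R"
  shows "poly_prod_mset R M \<in> monic_polys R (mset_degree degree M)"
  using assms
proof (induction M)
  case empty
  then show ?case
    using poly_prod_mset_mset[of "[]"] UP.one_closed by (simp add: monic_polys_def univ_poly_one)
next
  case (add p M)
  then have p: "p \<in> carrier (poly_ring R)" "p \<noteq> []" "lead_coeff p = \<one>"
    and M: "set_mset M \<subseteq> carrier (poly_ring R)"
    by (auto simp: monic_irreducibles_def)
  have "poly_prod_mset R (add_mset p M) = poly_prod_mset R M \<otimes>\<^bsub>poly_ring R\<^esub> p"
    using poly_prod_mset_add[OF M, of "{#p#}"] poly_prod_mset_mset[of "[p]"] p by simp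
  with add poly_mult_nonzero[of "poly_prod_mset R M" p] p show ?case
    by (auto simp: monic_polys_def)
qed

lemma monic_associated_eq:
  assumes "p \<in> monic_polys R i" "q \<in> monic_polys R j" "p \<sim>\<^bsub>poly_ring R\<^esub> q"
  shows "p = q"
proof -
  obtain k where k: "k \<in> carrier R - {\<zero>}" "p = [k] \<otimes>\<^bsub>poly_ring R\<^esub> q"
    using assms associated_polynomials_iff[OF carrier_is_subfield] by (auto simp: monic_polys_def)
  then have "[k] \<in> carrier (poly_ring R)"
    by (auto simp flip: univ_poly_carrier simp: polynomial_def)
  then have "k = \<one>"
    using k assms poly_mult_nonzero(3)[of "[k]" q] by (simp add: monic_polys_def)
  then show ?thesis
    using k assms UP.l_one[of q] by (simp add: monic_polys_def univ_poly_one)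
qed

lemma monic_normalization:
  assumes b: "b \<in> carrier (poly_ring R)" "b \<noteq> []"
  obtains c g where "c \<in> carrier R - {\<zero>}" "g \<in> monic_polys R (degree b)"
    "b = [c] \<otimes>\<^bsub>poly_ring R\<^esub> g"
proof -
  define c where "c = lead_coeff b"
  have c: "c \<in> carrier R - {\<zero>}"
    using b by (cases b) (auto simp: c_def polynomial_def simp flip: univ_poly_carrier)
  then have ic: "inv c \<in> carrier R - {\<zero>}" "inv c \<otimes> c = \<one>" "c \<otimes> inv c = \<one>"
    using field_Units by auto
  have cU: "[c] \<in> carrier (poly_ring R)" "[inv c] \<in> carrier (poly_ring R)"
    using c ic by (auto simp flip: univ_poly_carrier simp: polynomial_def)
  define g where "g = [inv c] \<otimes>\<^bsub>poly_ring R\<^esub> b"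
  have g: "g \<in> monic_polys R (degree b)"
    using poly_mult_nonzero[OF cU(2) _ b] ic cU b by (auto simp: g_def c_def monic_polys_def)
  have "[c] \<otimes>\<^bsub>poly_ring R\<^esub> g = ([c] \<otimes>\<^bsub>poly_ring R\<^esub> [inv c]) \<otimes>\<^bsub>poly_ring R\<^esub> b"
    using cU b by (simp add: g_def UP.m_assoc)
  moreover have "[c] \<otimes>\<^bsub>poly_ring R\<^esub> [inv c] = \<one>\<^bsub>poly_ring R\<^esub>"
    using c ic by (simp add: univ_poly_mult univ_poly_one)
  ultimately have "b = [c] \<otimes>\<^bsub>poly_ring R\<^esub> g"
    using b by simp
  with c g show ?thesis by (rule that)
qed

lemma pirreducible_associated:
  assumes "p \<in> carrier (poly_ring R)" "pirreducible (carrier R) p"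
    and "q \<in> carrier (poly_ring R)" "q \<noteq> []" "p \<sim>\<^bsub>poly_ring R\<^esub> q"
  shows "pirreducible (carrier R) q"
proof -
  have "irreducible (mult_of (poly_ring R)) p" "p \<noteq> []"
    using UP.ring_irreducibleE(1,3)[OF assms(1,2)] by (simp_all add: univ_poly_zero)
  moreover have "p \<sim>\<^bsub>mult_of (poly_ring R)\<^esub> q"
    using UP.assoc_iff_assoc_mult assms by blast
  ultimately have "irreducible (mult_of (poly_ring R)) q"
    using UP.mult_of.irreducible_cong assms by (auto simp: univ_poly_zero)
  then show ?thesis
    using UP.ring_irreducibleI' assms by (simp add: univ_poly_zero)
qed

lemma monic_irreducible_associate:
  assumes b: "b \<in> carrier (poly_ring R)" "pirreducible (carrier R) b"
  obtains c g where "c \<in> carrier R - {\<zero>}" "g \<in> monic_irreducibles R" "degree g = degree b"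
    "b = [c] \<otimes>\<^bsub>poly_ring R\<^esub> g"
proof -
  have "b \<noteq> []"
    using UP.ring_irreducibleE(1)[OF b] by (simp add: univ_poly_zero)
  then obtain c g where c: "c \<in> carrier R - {\<zero>}" and g: "g \<in> monic_polys R (degree b)"
    and bg: "b = [c] \<otimes>\<^bsub>poly_ring R\<^esub> g"
    using monic_normalization[OF b(1)] by blast
  then have "g \<in> monic_irreducibles R"
    using b associated_polynomials_iff[OF carrier_is_subfield b(1), of g]
    by (auto simp: monic_polys_def monic_irreducibles_def intro: pirreducible_associated)
  with c g bg show ?thesis
    by (intro that) (auto simp: monic_polys_def)
qed

lemma monic_irreducible_divisor:
  assumes P: "P \<in> monic_polys R j" and j: "j \<noteq> 0"
  obtains g Q where "g \<in> monic_irreducibles R" "Q \<in> monic_polys R (degree Q)" "degree Q < j"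
    "P = g \<otimes>\<^bsub>poly_ring R\<^esub> Q"
proof -
  have P': "P \<in> carrier (poly_ring R)" "P \<noteq> []" "degree P = j"
    using P by (auto simp: monic_polys_def)
  then have "P \<notin> Units (poly_ring R)"
    using j univ_poly_units'[OF carrier_is_subfield] by simp
  moreover have "P \<in> carrier (poly_ring R) - {\<zero>\<^bsub>poly_ring R\<^esub>}"
    using P' by (simp add: univ_poly_zero)
  ultimately obtain b where b: "b \<in> carrier (poly_ring R)" "pirreducible (carrier R) b"
    "b divides\<^bsub>poly_ring R\<^esub> P"
    using UP.exists_irreducible_divisor by blast
  then obtain r where r: "r \<in> carrier (poly_ring R)" "P = b \<otimes>\<^bsub>poly_ring R\<^esub> r"
    unfolding factor_def by blast
  obtain c g where c: "c \<in> carrier R - {\<zero>}" and g: "g \<in> monic_irreducibles R"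
    and "degree g = degree b" and bg: "b = [c] \<otimes>\<^bsub>poly_ring R\<^esub> g"
    by (rule monic_irreducible_associate[OF b(1,2)])
  have g': "g \<in> carrier (poly_ring R)" "g \<noteq> []" "lead_coeff g = \<one>"
    using g by (simp_all add: monic_irreducibles_def)
  define Q where "Q = [c] \<otimes>\<^bsub>poly_ring R\<^esub> r"
  have "[c] \<in> carrier (poly_ring R)"
    using c by (auto simp: polynomial_def simp flip: univ_poly_carrier)
  then have Q: "Q \<in> carrier (poly_ring R)" "P = g \<otimes>\<^bsub>poly_ring R\<^esub> Q"
    using g' r bg by (auto simp: Q_def UP.m_assoc UP.m_lcomm)
  then have "Q \<noteq> []"
    using P' g' UP.r_null[of g] by (auto simp: univ_poly_zero)
  moreover have "lead_coeff Q \<in> carrier R"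
    using Q(1) \<open>Q \<noteq> []\<close> by (cases Q) (auto simp: polynomial_def simp flip: univ_poly_carrier)
  ultimately have "Q \<in> monic_polys R (degree Q)" "degree Q < j"
    using poly_mult_nonzero[OF g'(1,2), of Q] Q P g' monic_irreducibles_degree[OF g]
    by (auto simp: monic_polys_def)
  then show ?thesis
    using g Q(2) by (intro that)
qed

lemma ex_monic_irreducible_factorization:
  "P \<in> monic_polys R j \<Longrightarrow> \<exists>M. set_mset M \<subseteq> monic_irreducibles R \<and> poly_prod_mset R M = P"
proof (induction j arbitrary: P rule: less_induct)
  case (less j)
  show ?case
  proof (cases "j = 0")
    case True
    then have "P = \<one>\<^bsub>poly_ring R\<^esub>"
      using less.prems by (cases P) (auto simp: monic_polys_def univ_poly_one)
    then show ?thesis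
      using poly_prod_mset_mset[of "[]"] by (intro exI[of _ "{#}"]) auto
  next
    case False
    then obtain g Q where g: "g \<in> monic_irreducibles R" and Q: "Q \<in> monic_polys R (degree Q)"
      "degree Q < j" "P = g \<otimes>\<^bsub>poly_ring R\<^esub> Q"
      using monic_irreducible_divisor[OF less.prems] by blast
    then obtain M where "set_mset M \<subseteq> monic_irreducibles R" "poly_prod_mset R M = Q"
      using less.IH by blast
    then show ?thesis
      using poly_prod_mset_add[of M "{#g#}"] poly_prod_mset_mset[of "[g]"] g Q UP.m_comm[of g Q]
      by (intro exI[of _ "M + {#g#}"]) (auto simp: monic_irreducibles_def monic_polys_def)
  qed
qed

lemma irreducible_factorizations_essentially_equal:
  assumes xs: "set xs \<subseteq> carrier (poly_ring R)" "\<forall>x\<in>set xs. pirreducible (carrier R) x"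
    and ys: "set ys \<subseteq> carrier (poly_ring R)" "\<forall>y\<in>set ys. pirreducible (carrier R) y"
    and eq: "foldr (\<otimes>\<^bsub>poly_ring R\<^esub>) xs \<one>\<^bsub>poly_ring R\<^esub> = foldr (\<otimes>\<^bsub>poly_ring R\<^esub>) ys \<one>\<^bsub>poly_ring R\<^esub>"
  shows "essentially_equal (mult_of (poly_ring R)) xs ys"
proof -
  define a where "a = foldr (\<otimes>\<^bsub>poly_ring R\<^esub>) xs \<one>\<^bsub>poly_ring R\<^esub>"
  have mult_of: "set zs \<subseteq> carrier (mult_of (poly_ring R))"
    "\<forall>z\<in>set zs. irreducible (mult_of (poly_ring R)) z"
    if "set zs \<subseteq> carrier (poly_ring R)" "\<forall>z\<in>set zs. pirreducible (carrier R) z" for zs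
    using that UP.ring_irreducibleE(1,3) by auto
  have nil_if_unit: "zs = []"
    if "set zs \<subseteq> carrier (poly_ring R)" "\<forall>z\<in>set zs. pirreducible (carrier R) z"
      "foldr (\<otimes>\<^bsub>poly_ring R\<^esub>) zs \<one>\<^bsub>poly_ring R\<^esub> \<in> Units (poly_ring R)" for zs
  proof (cases zs)
    case (Cons z zs')
    then have "z \<in> Units (poly_ring R)"
      using that UP.unit_factor[of z "foldr (\<otimes>\<^bsub>poly_ring R\<^esub>) zs' \<one>\<^bsub>poly_ring R\<^esub>"] by auto
    then show ?thesis
      using that UP.ring_irreducibleE(4)[of z] Cons by auto
  qed
  show ?thesis
  proof (cases "a \<in> Units (poly_ring R)")
    case True
    then show ?thesis
      using nil_if_unit[OF xs] nil_if_unit[OF ys] eq by (simp add: a_def essentially_equal_def)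
  next
    case False
    have "factors (mult_of (poly_ring R)) xs a" "factors (mult_of (poly_ring R)) ys a"
      using mult_of[OF xs] mult_of[OF ys] eq by (simp_all add: factors_def a_def)
    then show ?thesis
      using UP.mult_of.factors_unique mult_of[OF xs] mult_of[OF ys] False
        UP.mult_of.multlist_closed[OF mult_of(1)[OF xs]]
      by (auto simp: a_def)
  qed
qed

lemma poly_prod_mset_inj:
  assumes M: "set_mset M \<subseteq> monic_irreducibles R" and N: "set_mset N \<subseteq> monic_irreducibles R"
    and eq: "poly_prod_mset R M = poly_prod_mset R N"
  shows "M = N"
proof -
  obtain xs ys where xs: "mset xs = M" and ys: "mset ys = N" by (metis ex_mset)
  have cxs: "set xs \<subseteq> carrier (poly_ring R)" "\<forall>x\<in>set xs. pirreducible (carrier R) x"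
    and cys: "set ys \<subseteq> carrier (poly_ring R)" "\<forall>y\<in>set ys. pirreducible (carrier R) y"
    using xs ys M N by (auto simp: monic_irreducibles_def)
  then have "essentially_equal (mult_of (poly_ring R)) xs ys"
    using eq xs ys poly_prod_mset_mset[OF cxs(1)] poly_prod_mset_mset[OF cys(1)]
    by (intro irreducible_factorizations_essentially_equal) auto
  then obtain xs' where xs': "xs <~~> xs'" "list_all2 (\<lambda>a b. a \<sim>\<^bsub>mult_of (poly_ring R)\<^esub> b) xs' ys"
    unfolding essentially_equal_def by blast
  have "set xs' \<subseteq> monic_irreducibles R" "set ys \<subseteq> monic_irreducibles R"
    using xs'(1) xs ys M N by (auto dest: mset_eq_setD)
  with xs'(2) have "xs' = ys"
  proof (induction rule: list_all2_induct)
    case (Cons x xs y ys)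
    then have "x \<sim>\<^bsub>poly_ring R\<^esub> y"
      using UP.assoc_iff_assoc_mult by (auto simp: monic_irreducibles_def)
    then have "x = y"
      using Cons.prems
      by (intro monic_associated_eq) (auto simp: monic_irreducibles_def monic_polys_def)
    with Cons show ?case by simp
  qed simp
  then show ?thesis
    using xs ys xs'(1) by simp
qed

lemma num_irred_factors_poly_prod_mset:
  assumes M: "set_mset M \<subseteq> monic_irreducibles R"
  shows "num_irred_factors R (poly_prod_mset R M) = size M"
proof -
  obtain xs where xs: "mset xs = M" by (metis ex_mset)
  have cx: "set xs \<subseteq> carrier (poly_ring R)" "\<forall>x\<in>set xs. pirreducible (carrier R) x"
    using xs M by (auto simp: monic_irreducibles_def)
  have fx: "foldr (\<otimes>\<^bsub>poly_ring R\<^esub>) xs \<one>\<^bsub>poly_ring R\<^esub> = poly_prod_mset R M"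
    using poly_prod_mset_mset[OF cx(1)] xs by simp
  show ?thesis
    unfolding num_irred_factors_def
  proof (rule the_equality)
    fix m assume "\<exists>fs. length fs = m \<and> set fs \<subseteq> carrier (poly_ring R) \<and>
        (\<forall>f\<in>set fs. pirreducible (carrier R) f) \<and>
        foldr (\<otimes>\<^bsub>poly_ring R\<^esub>) fs \<one>\<^bsub>poly_ring R\<^esub> = poly_prod_mset R M"
    then obtain fs where fs: "length fs = m" "set fs \<subseteq> carrier (poly_ring R)"
      "\<forall>f\<in>set fs. pirreducible (carrier R) f"
      "foldr (\<otimes>\<^bsub>poly_ring R\<^esub>) fs \<one>\<^bsub>poly_ring R\<^esub> = poly_prod_mset R M"
      by blast
    have "essentially_equal (mult_of (poly_ring R)) fs xs"
      using irreducible_factorizations_essentially_equal[OF fs(2,3) cx] fs(4) fx by simp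
    then show "m = size M"
      using fs(1) xs by (metis essentially_equal_def list_all2_lengthD size_mset)
  qed (use cx fx xs in auto)
qed

lemma monic_polys_eq:
  "monic_polys R j = (\<lambda>xs. \<one> # xs) ` {xs. set xs \<subseteq> carrier R \<and> length xs = j}"
proof (intro equalityI subsetI)
  fix P assume P: "P \<in> monic_polys R j"
  then obtain xs where "P = \<one> # xs"
    by (cases P) (auto simp: monic_polys_def)
  with P show "P \<in> (\<lambda>xs. \<one> # xs) ` {xs. set xs \<subseteq> carrier R \<and> length xs = j}"
    by (auto simp: monic_polys_def dest!: polynomial_incl simp flip: univ_poly_carrier)
qed (auto simp: monic_polys_def polynomial_def simp flip: univ_poly_carrier)

lemma card_monic_polys: "finite (carrier R) \<Longrightarrow> card (monic_polys R j) = card (carrier R) ^ j"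
  unfolding monic_polys_eq by (subst card_image) (auto simp: inj_on_def card_lists_length_eq)

lemma monic_polys_const_term_eq:
  assumes "1 \<le> j" "t \<in> carrier R"
  shows "{P \<in> monic_polys R j. const_term P = t} =
    (\<lambda>ys. \<one> # ys @ [t]) ` {ys. set ys \<subseteq> carrier R \<and> length ys = j - 1}"
proof (intro equalityI subsetI)
  fix P assume "P \<in> {P \<in> monic_polys R j. const_term P = t}"
  then obtain xs where P: "P = \<one> # xs" "set xs \<subseteq> carrier R" "length xs = j" "const_term P = t"
    unfolding monic_polys_eq by blast
  then obtain ys x where "xs = ys @ [x]"
    using assms by (cases xs rule: rev_exhaust) auto
  with P const_term_eq_last[of "\<one> # ys" x]
  show "P \<in> (\<lambda>ys. \<one> # ys @ [t]) ` {ys. set ys \<subseteq> carrier R \<and> length ys = j - 1}"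
    by auto
next
  fix P assume "P \<in> (\<lambda>ys. \<one> # ys @ [t]) ` {ys. set ys \<subseteq> carrier R \<and> length ys = j - 1}"
  then obtain ys where "P = \<one> # ys @ [t]" "set ys \<subseteq> carrier R" "length ys = j - 1"
    by blast
  with assms const_term_eq_last[of "\<one> # ys" t]
  show "P \<in> {P \<in> monic_polys R j. const_term P = t}"
    unfolding monic_polys_eq by (auto intro!: image_eqI[of _ _ "ys @ [t]"])
qed

lemma card_monic_polys_const_term:
  "finite (carrier R) \<Longrightarrow> 1 \<le> j \<Longrightarrow> t \<in> carrier R \<Longrightarrow>
    card {P \<in> monic_polys R j. const_term P = t} = card (carrier R) ^ (j - 1)"
  by (simp add: monic_polys_const_term_eq card_image inj_on_def card_lists_length_eq)

lemma card_monic_factorizations: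
  "card {M. set_mset M \<subseteq> monic_irreducibles R \<and> mset_degree degree M = j \<and> \<Phi> (poly_prod_mset R M)}
    = card {P \<in> monic_polys R j. \<Phi> P}"
proof (rule bij_betw_same_card[of "poly_prod_mset R"], rule bij_betw_imageI)
  show "inj_on (poly_prod_mset R)
      {M. set_mset M \<subseteq> monic_irreducibles R \<and> mset_degree degree M = j \<and> \<Phi> (poly_prod_mset R M)}"
    using poly_prod_mset_inj by (auto simp: inj_on_def)
  show "poly_prod_mset R `
      {M. set_mset M \<subseteq> monic_irreducibles R \<and> mset_degree degree M = j \<and> \<Phi> (poly_prod_mset R M)}
      = {P \<in> monic_polys R j. \<Phi> P}"
  proof (intro equalityI subsetI)
    fix P assume P: "P \<in> {P \<in> monic_polys R j. \<Phi> P}"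
    then obtain M where M: "set_mset M \<subseteq> monic_irreducibles R" "poly_prod_mset R M = P"
      using ex_monic_irreducible_factorization by blast
    then have "mset_degree degree M = j"
      using poly_prod_mset_monic[OF M(1)] P by (simp add: monic_polys_def)
    with M P show "P \<in> poly_prod_mset R `
        {M. set_mset M \<subseteq> monic_irreducibles R \<and> mset_degree degree M = j \<and> \<Phi> (poly_prod_mset R M)}"
      by blast
  qed (use poly_prod_mset_monic in blast)
qed

lemma ex_unique_quotient:
  assumes "v \<in> carrier R" "t \<in> carrier R - {\<zero>}"
  shows "\<exists>s\<in>carrier R - {\<zero>}. \<forall>x\<in>carrier R. x \<otimes> v = t \<longrightarrow> x = s"
proof (cases "v = \<zero>")
  case False
  then have v: "v \<in> Units R" using assms field_Units by blast
  have "t \<otimes> inv v \<noteq> \<zero>"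
    using assms v by (metis DiffE Units_inv_closed Units_l_inv m_assoc insertI1 l_null r_one)
  moreover have "x = t \<otimes> inv v" if "x \<in> carrier R" "x \<otimes> v = t" for x
    using that v by (metis Units_closed Units_inv_closed Units_r_inv m_assoc r_one)
  ultimately show ?thesis
    using assms v by (intro bexI[of _ "t \<otimes> inv v"]) auto
qed (use assms in auto)

lemma const_term_poly_prod_mset_closed:
  "set_mset M \<subseteq> monic_irreducibles R \<Longrightarrow> const_term (poly_prod_mset R M) \<in> carrier R"
  using const_term_simprules_shell(1)[OF carrier_is_subring] poly_prod_mset_closed
  by (auto simp: monic_irreducibles_def)

lemma graded_multisets_monic_irreducibles:
  assumes fin: "finite (carrier R)"
  shows "graded_multisets (monic_irreducibles R) degree (\<lambda>M. const_term (poly_prod_mset R M))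
    (carrier R - {\<zero>}) (card (carrier R))"
proof
  show "1 \<le> degree p" if "p \<in> monic_irreducibles R" for p
    using monic_irreducibles_degree[OF that] .
  show "card {M. set_mset M \<subseteq> monic_irreducibles R \<and> mset_degree degree M = j}
      = card (carrier R) ^ j"
    for j using card_monic_factorizations[of j "\<lambda>_. True"] card_monic_polys[OF fin] by simp
  show "card {M. set_mset M \<subseteq> monic_irreducibles R \<and> mset_degree degree M = j \<and>
      const_term (poly_prod_mset R M) = t} \<le> card (carrier R) ^ (j - 1)"
    if "1 \<le> j" "t \<in> carrier R - {\<zero>}" for j t
    using card_monic_factorizations[of j "\<lambda>P. const_term P = t"]
      card_monic_polys_const_term[OF fin that(1)] that(2)
    by simp
  show "\<exists>s\<in>carrier R - {\<zero>}. \<forall>M. set_mset M \<subseteq> monic_irreducibles R \<longrightarrow>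
      const_term (poly_prod_mset R (M + replicate_mset a p)) = t \<longrightarrow>
      const_term (poly_prod_mset R M) = s"
    if p: "p \<in> monic_irreducibles R" and "1 \<le> a" and t: "t \<in> carrier R - {\<zero>}" for p a t
  proof -
    have p_pow: "set_mset (replicate_mset a p) \<subseteq> monic_irreducibles R"
      using p by simp
    obtain s where "s \<in> carrier R - {\<zero>}"
      and s: "\<And>x. x \<in> carrier R \<Longrightarrow>
        x \<otimes> const_term (poly_prod_mset R (replicate_mset a p)) = t \<Longrightarrow> x = s"
      using ex_unique_quotient[OF const_term_poly_prod_mset_closed[OF p_pow] t] by blast
    moreover have "const_term (poly_prod_mset R (M + replicate_mset a p))
        = const_term (poly_prod_mset R M) \<otimes> const_term (poly_prod_mset R (replicate_mset a p))"
      if "set_mset M \<subseteq> monic_irreducibles R" for M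
      using that p_pow by (intro const_term_poly_prod_mset_add) (auto simp: monic_irreducibles_def)
    ultimately show ?thesis
      using const_term_poly_prod_mset_closed by metis
  qed
  show "2 \<le> card (carrier R)"
    using card_mono[OF fin, of "{\<zero>, \<one>}"] by simp
qed

lemma L_set_eq: "L_set R n = {P \<in> monic_polys R n. const_term P = (\<ominus> \<one>) [^] n}"
  by (auto simp: L_set_def monic_polys_def const_term_def)

lemma minus_one_power_nonzero: "(\<ominus> \<one>) [^] (n::nat) \<in> carrier R - {\<zero>}"
  using Units_pow_closed[of "\<ominus> \<one>" n] field_Units by (auto simp: Units_minus_one_closed)

lemma card_L_set_many_factors:
  "card {P \<in> L_set R n. c < real (num_irred_factors R P)} =
   card {M. set_mset M \<subseteq> monic_irreducibles R \<and> mset_degree degree M = n \<and>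
     const_term (poly_prod_mset R M) = (\<ominus> \<one>) [^] n \<and> c < real (size M)}"
proof -
  have "card {P \<in> L_set R n. c < real (num_irred_factors R P)}
      = card {P \<in> monic_polys R n. const_term P = (\<ominus> \<one>) [^] n \<and> c < real (num_irred_factors R P)}"
    by (simp add: L_set_eq)
  also have "\<dots> = card {M. set_mset M \<subseteq> monic_irreducibles R \<and> mset_degree degree M = n \<and>
      const_term (poly_prod_mset R M) = (\<ominus> \<one>) [^] n \<and>
      c < real (num_irred_factors R (poly_prod_mset R M))}"
    by (rule card_monic_factorizations[symmetric])
  also have "\<dots> = card {M. set_mset M \<subseteq> monic_irreducibles R \<and> mset_degree degree M = n \<and>
      const_term (poly_prod_mset R M) = (\<ominus> \<one>) [^] n \<and> c < real (size M)}"
    by (intro arg_cong[where f = card] Collect_cong) (auto simp: num_irred_factors_poly_prod_mset)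
  finally show ?thesis .
qed

lemma card_L_set: "finite (carrier R) \<Longrightarrow> 1 \<le> n \<Longrightarrow> card (L_set R n) = card (carrier R) ^ (n - 1)"
  using card_monic_polys_const_term minus_one_power_nonzero by (simp add: L_set_eq)

lemma card_L_set_many_factors_le:
  assumes fin: "finite (carrier R)" and z: "1 < z"
    and E: "\<And>J. (\<Sum>i=1..J. real i * (z / sqrt 2) ^ i) \<le> E" and n: "1 \<le> n"
  shows "real (card {P \<in> L_set R n. c < real (num_irred_factors R P)})
    \<le> z powr (- c) * (real (card (L_set R n)) * beta (z + 2 * E) (z + E) n)"
proof -
  interpret G: graded_multisets "monic_irreducibles R" degree "\<lambda>M. const_term (poly_prod_mset R M)"
    "carrier R - {\<zero>}" "card (carrier R)"
    by (rule graded_multisets_monic_irreducibles[OF fin])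
  show ?thesis
    using G.card_many_factors_le[where c = c, OF z E n minus_one_power_nonzero[of n]]
      card_L_set[OF fin n]
    unfolding card_L_set_many_factors G.graded_def by simp
qed

end

section \<open>Choice of the constants\<close>

lemma sum_of_nat_mult_power_le:
  fixes r :: real
  assumes "0 \<le> r" "r < 1"
  shows "(\<Sum>i=1..J. real i * r ^ i) \<le> 1 / (1 - r) ^ 2"
proof -
  have "(\<Sum>i=1..J. real i * r ^ i) \<le> (\<Sum>i=1..J. real i * r ^ (i - 1))"
    using assms by (intro sum_mono mult_left_mono power_decreasing) auto
  also have "\<dots> = (\<Sum>i<J. real (Suc i) * r ^ i)"
    by (rule sum.reindex_bij_witness[where i = Suc and j = "\<lambda>i. i - 1"]) auto
  also have "\<dots> \<le> (\<Sum>i. real (Suc i) * r ^ i)"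
    using geometric_deriv_sums[of r] assms by (intro sum_le_suminf) (auto simp: sums_iff)
  also have "\<dots> = 1 / (1 - r) ^ 2"
    using geometric_deriv_sums[of r] assms by (simp add: sums_iff)
  finally show ?thesis .
qed

lemma powr_ln_decay:
  fixes z D :: real
  assumes z: "1 < z" and n: "2 \<le> n" and D: "1 \<le> D"
  shows "z powr (- ((k + real m + log 2 D) / ln z * ln (real n))) * (D * real n ^ m)
    \<le> real n powr (- k)"
proof -
  have n0: "0 < real n" using n by simp
  have "z powr (- ((k + real m + log 2 D) / ln z * ln (real n)))
      = real n powr (- k + - log 2 D + - real m)"
    using z n0 by (simp add: powr_def field_simps)
  also have "\<dots> = real n powr (- k) * real n powr (- log 2 D) * real n powr (- real m)"
    by (simp only: powr_add)
  finally have "z powr (- ((k + real m + log 2 D) / ln z * ln (real n))) * (D * real n ^ m)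
      = real n powr (- k) * (D * real n powr (- log 2 D)) * (real n powr (- real m) * real n ^ m)"
    by (simp only: mult_ac)
  also have "real n powr (- real m) * real n ^ m = 1"
    using n0 by (simp add: powr_minus powr_realpow)
  finally have eq: "z powr (- ((k + real m + log 2 D) / ln z * ln (real n))) * (D * real n ^ m)
      = real n powr (- k) * (D * real n powr (- log 2 D))"
    by simp
  have "D * real n powr (- log 2 D) \<le> D * 2 powr (- log 2 D)"
    using n D by (intro mult_left_mono powr_mono2') auto
  also have "\<dots> = 1"
    using D by (simp add: powr_minus_divide)
  finally show ?thesis
    unfolding eq by (simp add: mult_left_le)
qed

lemma card_many_irreducible_factors_le:
  fixes R :: "('a, 'b) ring_scheme"
  assumes z: "1 < z" and E: "\<And>J. (\<Sum>i=1..J. real i * (z / sqrt 2) ^ i) \<le> E"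
    and D: "1 \<le> D" "\<And>n. 1 \<le> n \<Longrightarrow> beta (z + 2 * E) (z + E) n \<le> D * real n ^ m"
    and n: "2 \<le> n" and R: "field R" "finite (carrier R)"
  shows "real (card {P \<in> L_set R n.
      real (num_irred_factors R P) > (k + real m + log 2 D) / ln z * ln (real n)})
    \<le> real n powr (- k) * real (card (L_set R n))"
proof -
  let ?c = "(k + real m + log 2 D) / ln z * ln (real n)"
  have "real (card {P \<in> L_set R n. ?c < real (num_irred_factors R P)})
      \<le> z powr (- ?c) * (real (card (L_set R n)) * beta (z + 2 * E) (z + E) n)"
    using field.card_L_set_many_factors_le[OF R z E] n by simp
  also have "\<dots> \<le> z powr (- ?c) * (real (card (L_set R n)) * (D * real n ^ m))"
    using D(2)[of n] n by (intro mult_left_mono) auto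
  also have "\<dots> = real (card (L_set R n)) * (z powr (- ?c) * (D * real n ^ m))"
    by (simp only: mult_ac)
  also have "\<dots> \<le> real (card (L_set R n)) * real n powr (- k)"
    by (intro mult_left_mono powr_ln_decay[OF z n D(1)]) auto
  finally show ?thesis by (simp only: mult.commute)
qed

lemma ex_admissible_constants:
  obtains z E D m where "1 < z" "\<And>J. (\<Sum>i=1..J. real i * (z / sqrt 2) ^ i) \<le> E"
    "1 \<le> D" "\<And>n. 1 \<le> n \<Longrightarrow> beta (z + 2 * E) (z + E) n \<le> D * real n ^ m"
proof -
  \<comment> \<open>any \<open>1 < z < \<surd>2\<close> would do\<close>
  define z :: real where "z = 6 / 5"
  define E where "E = 1 / (1 - z / sqrt 2) ^ 2"
  have "z < sqrt 2"
    unfolding z_def by (rule real_less_rsqrt) (simp add: power2_eq_square)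
  then have E: "\<And>J. (\<Sum>i=1..J. real i * (z / sqrt 2) ^ i) \<le> E"
    unfolding E_def by (intro sum_of_nat_mult_power_le) (auto simp: z_def)
  have CK: "0 \<le> z + 2 * E" "0 \<le> z + E"
    by (auto simp: z_def E_def)
  obtain m D where D: "1 \<le> D" "\<And>n. 1 \<le> n \<Longrightarrow> beta (z + 2 * E) (z + E) n \<le> D * real n ^ m"
    using beta_polynomial_bound[OF CK] by blast
  have "1 < z" by (simp add: z_def)
  then show ?thesis by (rule that[OF _ E D])
qed

theorem proposition2p4:
  shows "\<forall>k::real. k > 0 \<longrightarrow> (\<exists>N::real. \<forall>n::nat. \<forall>R :: nat ring.
     n \<ge> 2 \<longrightarrow> field R \<longrightarrow> finite (carrier R) \<longrightarrow>
     real (card {P \<in> L_set R n. real (num_irred_factors R P) > N * ln (real n)})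
       \<le> real n powr (- k) * real (card (L_set R n)))"
proof -
  \<comment> \<open>the argument works for every real \<open>k\<close>\<close>
  obtain z E D m where z: "1 < z" and E: "\<And>J. (\<Sum>i=1..J. real i * (z / sqrt 2) ^ i) \<le> E"
    and D: "1 \<le> D" "\<And>n. 1 \<le> n \<Longrightarrow> beta (z + 2 * E) (z + E) n \<le> D * real n ^ m"
    using ex_admissible_constants by blast
  show ?thesis
    by (intro allI impI exI) (rule card_many_irreducible_factors_le[OF z E D])
qed

end
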